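(* Let $n\ge1$, $m=2^n$, $A\subseteq\{0,1\}^n$, $a=|A|$. The rank of irreducibility of the orthogonal system $S_A$ equals $IR(S_A)=m-a$. Consequently, the average rank of irreducibility over all $2^m$ orthogonal systems $S_A$, $A\subseteq\{0,1\}^n$, equals $$2^{-m}\sum_{a=0}^{m}(m-a)\binom{m}{a}=\frac{m}{2}.$$
   Context: Boolean algebras are in the language $\{\vee,\cdot,\bar{\ },0,1\}$; the boolean algebra of rank $r\ge1$ is the power set algebra of an $r$-element set. Orthogonal variables: $Z=\{z_\alpha:\alpha\in\{0,1\}^n\}$, $|Z|=m=2^n$. For $A\subseteq\{0,1\}^n$ the orthogonal system is $$S_A=\{z_\alpha=0\mid\alpha\in A\}\cup\{z_\alpha z_\beta=0\mid \alpha\ne\beta\}\cup\{\textstyle\bigvee_{\alpha}z_\alpha=1\}.$$ A nonempty algebraic set (solution set of a system) is irreducible if it is not a finite union of proper algebraic subsets. The rank of irreducibility $IR(S)$ of a system $S$ is the number $k\ge1$ such that the solution set of $S$ is irreducible over the boolean algebra of rank $k$ but reducible over the boolean algebra of every rank $r<k$; if $S$ is inconsistent over every nontrivial boolean algebra, $IR(S)=0$. *)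

theory Defs
  imports Complex_Main "HOL-Library.FuncSet"
begin

datatype 'v bterm =
    Var 'v
  | Zero
  | One
  | Join "'v bterm" "'v bterm"
  | Meet "'v bterm" "'v bterm"
  | Compl "'v bterm"

fun bvars :: "'v bterm \<Rightarrow> 'v set" where
  "bvars (Var v) = {v}"
| "bvars Zero = {}"
| "bvars One = {}"
| "bvars (Join s t) = bvars s \<union> bvars t"
| "bvars (Meet s t) = bvars s \<union> bvars t"
| "bvars (Compl s) = bvars s"

text \<open>The boolean algebra of rank r is the power set algebra of the r-element set {..<r}.
  Evaluation of a term at a point p.\<close>
fun beval :: "nat \<Rightarrow> ('v \<Rightarrow> nat set) \<Rightarrow> 'v bterm \<Rightarrow> nat set" where
  "beval r p (Var v) = p v"
| "beval r p Zero = {}"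
| "beval r p One = {..<r}"
| "beval r p (Join s t) = beval r p s \<union> beval r p t"
| "beval r p (Meet s t) = beval r p s \<inter> beval r p t"
| "beval r p (Compl s) = {..<r} - beval r p s"

type_synonym 'v equation = "'v bterm \<times> 'v bterm"

definition sol :: "nat \<Rightarrow> 'v set \<Rightarrow> 'v equation set \<Rightarrow> ('v \<Rightarrow> nat set) set" where
  "sol r Z S = {p \<in> Z \<rightarrow>\<^sub>E Pow {..<r}. \<forall>(s, t) \<in> S. beval r p s = beval r p t}"

definition system_over :: "'v set \<Rightarrow> 'v equation set \<Rightarrow> bool" where
  "system_over Z S \<longleftrightarrow> (\<forall>(s, t) \<in> S. bvars s \<union> bvars t \<subseteq> Z)"

definition algebraic :: "nat \<Rightarrow> 'v set \<Rightarrow> ('v \<Rightarrow> nat set) set \<Rightarrow> bool" where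
  "algebraic r Z Y \<longleftrightarrow> (\<exists>S. system_over Z S \<and> Y = sol r Z S)"

definition irreducible_alg :: "nat \<Rightarrow> 'v set \<Rightarrow> ('v \<Rightarrow> nat set) set \<Rightarrow> bool" where
  "irreducible_alg r Z Y \<longleftrightarrow>
     Y \<noteq> {} \<and> algebraic r Z Y \<and>
     \<not> (\<exists>F. finite F \<and> (\<forall>Y' \<in> F. algebraic r Z Y' \<and> Y' \<subset> Y) \<and> Y = \<Union>F)"

definition is_IR :: "'v set \<Rightarrow> 'v equation set \<Rightarrow> nat \<Rightarrow> bool" where
  "is_IR Z S k \<longleftrightarrow>
     (k = 0 \<and> (\<forall>r \<ge> 1. sol r Z S = {})) \<or>
     (k \<ge> 1 \<and> irreducible_alg k Z (sol k Z S) \<and>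
        (\<forall>r. 1 \<le> r \<and> r < k \<longrightarrow> \<not> irreducible_alg r Z (sol r Z S)))"

definition IR :: "'v set \<Rightarrow> 'v equation set \<Rightarrow> nat" where
  "IR Z S = (THE k. is_IR Z S k)"

definition cube :: "nat \<Rightarrow> bool list set" where
  "cube n = {xs. length xs = n}"

definition big_join :: "nat \<Rightarrow> bool list bterm" where
  "big_join n = foldr (\<lambda>\<alpha> t. Join (Var \<alpha>) t) (List.n_lists n [False, True]) Zero"

definition orth_system :: "nat \<Rightarrow> bool list set \<Rightarrow> bool list equation set" where
  "orth_system n A =
     {(Var \<alpha>, Zero) | \<alpha>. \<alpha> \<in> A}
     \<union> {(Meet (Var \<alpha>) (Var \<beta>), Zero) | \<alpha> \<beta>. \<alpha> \<in> cube n \<and> \<beta> \<in> cube n \<and> \<alpha> \<noteq> \<beta>}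
     \<union> {(big_join n, One)}"

end

theory Submission
  imports Defs "HOL-Library.Disjoint_Sets"
begin

text \<open>A solution of \<open>S\<^sub>A\<close> over the power set of \<open>{..<r}\<close> is a partition of \<open>{..<r}\<close> into
  blocks indexed by \<open>{0,1}\<^sup>n\<close> whose blocks over \<open>A\<close> are empty; equivalently, a labelling of
  every coordinate \<open>i < r\<close> by an atom in \<open>C = {0,1}\<^sup>n - A\<close>. Since terms are evaluated
  coordinatewise, an equation holds at a point as soon as it holds in the two-element algebra
  for every atom that occurs as a label. If \<open>r < |C|\<close>, some atom does not occur, so the
  solution set is the union of the proper algebraic subsets where \<open>z\<^sub>\<beta> = 0\<close> for \<open>\<beta> \<in> C\<close>.
  If \<open>r \<ge> |C|\<close>, there is a point at which every atom occurs; every equation true at that point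
  holds on the whole solution set, so it is irreducible. Hence \<open>IR(S\<^sub>A) = |C| = m - a\<close>, and
  averaging over \<open>A\<close> gives \<open>2\<^sup>-\<^sup>m \<Sum> (m - a) (m choose a) = m 2\<^sup>m\<^sup>-\<^sup>1 / 2\<^sup>m = m / 2\<close>.\<close>

lemma obtain_onto_lessThan:
  assumes "finite C" "C \<noteq> {}" "card C \<le> r"
  obtains g :: "nat \<Rightarrow> 'a" where "g ` {..<r} = C"
proof -
  obtain h where h: "bij_betw h {..<card C} C"
    using ex_bij_betw_nat_finite[OF assms(1)] by (auto simp: atLeast0LessThan)
  obtain c where "c \<in> C" using assms(2) by blast
  define g where "g i = (if i < card C then h i else c)" for i
  have "g ` {..<r} \<subseteq> C" using h \<open>c \<in> C\<close> by (auto simp: g_def bij_betw_def)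
  moreover have "C \<subseteq> g ` {..<r}"
  proof
    fix x assume "x \<in> C"
    then obtain i where "i < card C" "x = h i" using h by (auto simp: bij_betw_def)
    then show "x \<in> g ` {..<r}" using assms(3) by (auto simp: g_def intro!: image_eqI[of _ _ i])
  qed
  ultimately show ?thesis using that by blast
qed

lemma sum_Pow_by_card:
  fixes f :: "nat \<Rightarrow> 'a :: comm_semiring_1"
  assumes "finite Z"
  shows "(\<Sum>B\<in>Pow Z. f (card B)) = (\<Sum>a = 0..card Z. f a * of_nat (card Z choose a))"
proof -
  have "(\<Sum>B\<in>Pow Z. f (card B)) = (\<Sum>a = 0..card Z. \<Sum>B\<in>{B \<in> Pow Z. card B = a}. f (card B))"
    using assms by (intro sum.group[symmetric]) (auto intro: card_mono)
  also have "\<dots> = (\<Sum>a = 0..card Z. f a * of_nat (card Z choose a))"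
    using n_subsets[OF assms] by (intro sum.cong) (simp_all add: Pow_def mult.commute)
  finally show ?thesis .
qed

lemma sum_diff_mult_choose: "(\<Sum>a = 0..m. (m - a) * (m choose a)) = m * 2 ^ (m - 1)"
proof -
  have "(\<Sum>a = 0..m. (m - a) * (m choose a)) = (\<Sum>a = 0..m. (m - (m + 0 - a)) * (m choose (m + 0 - a)))"
    by (rule sum.atLeastAtMost_rev)
  also have "\<dots> = (\<Sum>a = 0..m. a * (m choose a))"
    by (intro sum.cong) (auto simp: binomial_symmetric[symmetric])
  also have "\<dots> = m * 2 ^ (m - 1)" using choose_linear_sum[of m] by (simp add: atMost_atLeast0)
  finally show ?thesis .
qed

lemma mean_complement_binomial:
  "(\<Sum>a = 0..m. real (m - a) * real (m choose a)) / 2 ^ m = real m / 2"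
proof (cases "m = 0")
  case False
  have "(\<Sum>a = 0..m. real (m - a) * real (m choose a)) = real m * 2 ^ (m - 1)"
    using arg_cong[OF sum_diff_mult_choose[of m], of real] by simp
  moreover have "(2::real) ^ m = 2 * 2 ^ (m - 1)"
    using False power_minus_mult[of m "2::real"] by simp
  ultimately show ?thesis by simp
qed simp

fun beval_bool :: "('v \<Rightarrow> bool) \<Rightarrow> 'v bterm \<Rightarrow> bool" where
  "beval_bool f (Var v) = f v"
| "beval_bool f Zero = False"
| "beval_bool f One = True"
| "beval_bool f (Join s t) = (beval_bool f s \<or> beval_bool f t)"
| "beval_bool f (Meet s t) = (beval_bool f s \<and> beval_bool f t)"
| "beval_bool f (Compl s) = (\<not> beval_bool f s)"

lemma beval_bool_cong: "(\<And>v. v \<in> bvars t \<Longrightarrow> f v = g v) \<Longrightarrow> beval_bool f t = beval_bool g t"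
  by (induction t) auto

lemma mem_beval_iff_beval_bool: "i < r \<Longrightarrow> i \<in> beval r p t \<longleftrightarrow> beval_bool (\<lambda>v. i \<in> p v) t"
  by (induction t) auto

lemma beval_subset_lessThan: "(\<And>v. v \<in> bvars t \<Longrightarrow> p v \<subseteq> {..<r}) \<Longrightarrow> beval r p t \<subseteq> {..<r}"
  by (induction t) auto

lemma mem_beval_transfer:
  assumes "bvars t \<subseteq> Z" "i < r" "j < r'" "\<forall>v\<in>Z. i \<in> p v \<longleftrightarrow> j \<in> q v"
  shows "i \<in> beval r p t \<longleftrightarrow> j \<in> beval r' q t"
proof -
  have "beval_bool (\<lambda>v. i \<in> p v) t = beval_bool (\<lambda>v. j \<in> q v) t"
    using assms(1,4) by (intro beval_bool_cong) auto
  then show ?thesis using assms(2,3) by (simp add: mem_beval_iff_beval_bool)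
qed

lemma sol_transfer:
  assumes S: "system_over Z S" and p: "p \<in> sol r Z S" and q: "q \<in> Z \<rightarrow>\<^sub>E Pow {..<r'}"
    and copy: "\<And>i. i < r' \<Longrightarrow> \<exists>j<r. \<forall>v\<in>Z. i \<in> q v \<longleftrightarrow> j \<in> p v"
  shows "q \<in> sol r' Z S"
  unfolding sol_def
proof (intro CollectI conjI ballI q, clarify)
  fix s t assume st: "(s, t) \<in> S"
  then have vars: "bvars s \<subseteq> Z" "bvars t \<subseteq> Z" using S unfolding system_over_def by auto
  have p_eq: "beval r p s = beval r p t" using p st unfolding sol_def by blast
  have "i \<in> beval r' q s \<longleftrightarrow> i \<in> beval r' q t" if "i < r'" for i
  proof -
    obtain j where j: "j < r" "\<forall>v\<in>Z. i \<in> q v \<longleftrightarrow> j \<in> p v" using copy \<open>i < r'\<close> by blast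
    have "i \<in> beval r' q s \<longleftrightarrow> j \<in> beval r p s" using vars(1) \<open>i < r'\<close> j by (rule mem_beval_transfer)
    also have "\<dots> \<longleftrightarrow> i \<in> beval r' q t"
      using vars(2) \<open>i < r'\<close> j unfolding p_eq by (rule mem_beval_transfer[symmetric])
    finally show ?thesis .
  qed
  moreover have "beval r' q s \<subseteq> {..<r'}" "beval r' q t \<subseteq> {..<r'}"
    using vars q by (auto intro!: beval_subset_lessThan)
  ultimately show "beval r' q s = beval r' q t" by blast
qed

lemma irreducible_algI_generic_point:
  assumes "algebraic r Z Y" "p \<in> Y"
    and generic: "\<And>Y'. algebraic r Z Y' \<Longrightarrow> p \<in> Y' \<Longrightarrow> Y \<subseteq> Y'"
  shows "irreducible_alg r Z Y"
proof -
  have "\<not> (finite F \<and> (\<forall>Y'\<in>F. algebraic r Z Y' \<and> Y' \<subset> Y) \<and> Y = \<Union>F)" for F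
    using \<open>p \<in> Y\<close> generic by blast
  then show ?thesis using assms(1,2) unfolding irreducible_alg_def by blast
qed

lemma is_IR_unique: "is_IR Z S k \<Longrightarrow> is_IR Z S k' \<Longrightarrow> k = k'"
proof (induction k k' rule: linorder_wlog)
  case (le k k')
  show ?case
  proof (rule ccontr)
    assume "k \<noteq> k'"
    with le have "k < k'" "k' \<ge> 1" unfolding is_IR_def by auto
    with le.prems(2) have irr: "irreducible_alg k' Z (sol k' Z S)"
      and red: "k \<ge> 1 \<Longrightarrow> \<not> irreducible_alg k Z (sol k Z S)"
      unfolding is_IR_def by auto
    show False
    proof (cases "k = 0")
      case True
      with le.prems(1) \<open>k' \<ge> 1\<close> have "sol k' Z S = {}" unfolding is_IR_def by auto
      with irr show False unfolding irreducible_alg_def by blast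
    next
      case False
      with le.prems(1) red show False unfolding is_IR_def by auto
    qed
  qed
qed (rule sym)

lemma IR_eqI: "is_IR Z S k \<Longrightarrow> IR Z S = k"
  unfolding IR_def using is_IR_unique by blast

lemma set_n_lists_bool: "set (List.n_lists n [False, True]) = cube n"
  unfolding set_n_lists cube_def by auto

lemma beval_big_join: "beval r p (big_join n) = (\<Union>\<alpha>\<in>cube n. p \<alpha>)"
proof -
  have "beval r p (foldr (\<lambda>\<alpha> t. Join (Var \<alpha>) t) xs Zero) = (\<Union>\<alpha>\<in>set xs. p \<alpha>)" for xs
    by (induction xs) auto
  then show ?thesis by (simp add: big_join_def set_n_lists_bool)
qed

lemma system_over_orth_system:
  assumes "A \<subseteq> cube n"
  shows "system_over (cube n) (orth_system n A)"
proof -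
  have "bvars (foldr (\<lambda>\<alpha> t. Join (Var \<alpha>) t) xs Zero) = set xs" for xs :: "bool list list"
    by (induction xs) auto
  then show ?thesis
    using assms unfolding system_over_def orth_system_def big_join_def
    by (auto simp: set_n_lists_bool)
qed

lemma sol_orth_system_iff:
  "p \<in> sol r (cube n) (orth_system n A) \<longleftrightarrow>
    p \<in> cube n \<rightarrow>\<^sub>E Pow {..<r} \<and> (\<forall>\<alpha>\<in>A. p \<alpha> = {}) \<and> disjoint_family_on p (cube n)
    \<and> (\<Union>\<alpha>\<in>cube n. p \<alpha>) = {..<r}"
proof -
  have zero: "(\<forall>(s, t)\<in>{(Var \<alpha>, Zero) | \<alpha>. \<alpha> \<in> A}. beval r p s = beval r p t)
      \<longleftrightarrow> (\<forall>\<alpha>\<in>A. p \<alpha> = {})"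
    by (auto simp: setcompr_eq_image)
  let ?M = "{(Meet (Var \<alpha>) (Var \<beta>), Zero) | \<alpha> \<beta>. \<alpha> \<in> cube n \<and> \<beta> \<in> cube n \<and> \<alpha> \<noteq> \<beta>}"
  have orth: "(\<forall>(s, t)\<in>?M. beval r p s = beval r p t) \<longleftrightarrow> disjoint_family_on p (cube n)"
  proof
    assume H: "\<forall>(s, t)\<in>?M. beval r p s = beval r p t"
    show "disjoint_family_on p (cube n)"
      unfolding disjoint_family_on_def
    proof (intro ballI impI)
      fix \<alpha> \<beta> assume "\<alpha> \<in> cube n" "\<beta> \<in> cube n" "\<alpha> \<noteq> \<beta>"
      then have "(Meet (Var \<alpha>) (Var \<beta>), Zero) \<in> ?M" by blast
      with H have "beval r p (Meet (Var \<alpha>) (Var \<beta>)) = beval r p Zero" by fast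
      then show "p \<alpha> \<inter> p \<beta> = {}" by simp
    qed
  qed (auto simp: disjoint_family_on_def)
  have cover: "(\<forall>(s, t)\<in>{(big_join n, One)}. beval r p s = beval r p t) \<longleftrightarrow> (\<Union>\<alpha>\<in>cube n. p \<alpha>) = {..<r}"
    by (simp add: beval_big_join)
  show ?thesis
    unfolding sol_def orth_system_def ball_Un mem_Collect_eq zero orth cover by (simp only: conj_assoc)
qed

lemma finite_cube: "finite (cube n)"
  using finite_lists_length_eq[of "UNIV :: bool set" n] unfolding cube_def by simp

lemma card_cube: "card (cube n) = 2 ^ n"
  using card_lists_length_eq[of "UNIV :: bool set" n] unfolding cube_def by simp

lemma sol_orth_system_insert:
  "p \<in> sol r (cube n) (orth_system n (insert \<beta> A)) \<longleftrightarrow>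
    p \<in> sol r (cube n) (orth_system n A) \<and> p \<beta> = {}"
  unfolding sol_orth_system_iff by (simp only: ball_simps) blast

lemma orth_solution_label:
  assumes "p \<in> sol r (cube n) (orth_system n A)" "i < r"
  obtains \<alpha> where "\<alpha> \<in> cube n - A" "\<forall>v\<in>cube n. i \<in> p v \<longleftrightarrow> v = \<alpha>"
proof -
  note p = assms(1)[unfolded sol_orth_system_iff]
  obtain \<alpha> where \<alpha>: "\<alpha> \<in> cube n" "i \<in> p \<alpha>" using p \<open>i < r\<close> by blast
  have "\<alpha> \<notin> A" using p \<alpha>(2) by auto
  moreover have "v = \<alpha>" if "v \<in> cube n" "i \<in> p v" for v
    using disjoint_family_onD[of p "cube n" v \<alpha>] p that \<alpha> by blast
  ultimately show ?thesis using that \<alpha> by blast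
qed

lemma orth_solution_empty_block:
  assumes p: "p \<in> sol r (cube n) (orth_system n A)" and r: "r < card (cube n - A)"
  obtains \<beta> where "\<beta> \<in> cube n - A" "p \<beta> = {}"
proof (rule ccontr)
  assume "\<not> thesis"
  with that have nonempty: "p \<beta> \<noteq> {}" if "\<beta> \<in> cube n - A" for \<beta> using that by blast
  note p = p[unfolded sol_orth_system_iff]
  have fin: "finite (p \<beta>)" if "\<beta> \<in> cube n - A" for \<beta>
    using p that by (auto intro: finite_subset[of _ "{..<r}"])
  have "card (cube n - A) = (\<Sum>\<beta>\<in>cube n - A. 1)" by simp
  also have "\<dots> \<le> (\<Sum>\<beta>\<in>cube n - A. card (p \<beta>))"
    using nonempty fin by (intro sum_mono) (simp add: Suc_leI card_gt_0_iff)
  also have "\<dots> = card (\<Union>\<beta>\<in>cube n - A. p \<beta>)"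
    using p fin finite_cube
    by (intro card_UN_disjoint'[symmetric]) (auto intro: disjoint_family_on_mono)
  also have "\<dots> \<le> card {..<r}" using p by (intro card_mono) auto
  finally show False using r by simp
qed

lemma orth_solution_single_block:
  assumes "A \<subseteq> cube n" "\<beta> \<in> cube n - A"
  shows "(\<lambda>\<alpha>\<in>cube n. if \<alpha> = \<beta> then {..<r} else {}) \<in> sol r (cube n) (orth_system n A)"
  using assms unfolding sol_orth_system_iff disjoint_family_on_def by auto

lemma orth_solution_of_labelling:
  assumes "A \<subseteq> cube n" "g ` {..<r} \<subseteq> cube n - A"
  shows "(\<lambda>\<alpha>\<in>cube n. {i. i < r \<and> g i = \<alpha>}) \<in> sol r (cube n) (orth_system n A)"
  using assms unfolding sol_orth_system_iff disjoint_family_on_def by auto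

lemma orth_system_reducible:
  assumes A: "A \<subseteq> cube n" and r: "1 \<le> r" "r < card (cube n - A)"
  shows "\<not> irreducible_alg r (cube n) (sol r (cube n) (orth_system n A))"
proof -
  let ?Y = "sol r (cube n) (orth_system n A)"
  let ?Y\<^sub>\<beta> = "\<lambda>\<beta>. sol r (cube n) (orth_system n (insert \<beta> A))"
  have proper: "algebraic r (cube n) (?Y\<^sub>\<beta> \<beta>) \<and> ?Y\<^sub>\<beta> \<beta> \<subset> ?Y" if \<beta>: "\<beta> \<in> cube n - A" for \<beta>
  proof -
    let ?p = "\<lambda>\<alpha>\<in>cube n. if \<alpha> = \<beta> then {..<r} else {}"
    have "0 \<in> ?p \<beta>" using \<beta> r(1) by simp
    then have "?p \<notin> ?Y\<^sub>\<beta> \<beta>" unfolding sol_orth_system_insert by blast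
    moreover have "?p \<in> ?Y" using A \<beta> by (rule orth_solution_single_block)
    moreover have "?Y\<^sub>\<beta> \<beta> \<subseteq> ?Y" by (auto simp: sol_orth_system_insert)
    moreover have "algebraic r (cube n) (?Y\<^sub>\<beta> \<beta>)"
      unfolding algebraic_def using A \<beta> system_over_orth_system[of "insert \<beta> A" n] by blast
    ultimately show ?thesis by blast
  qed
  have "?Y \<subseteq> (\<Union>\<beta>\<in>cube n - A. ?Y\<^sub>\<beta> \<beta>)"
  proof
    fix p assume p: "p \<in> ?Y"
    then obtain \<beta> where "\<beta> \<in> cube n - A" "p \<beta> = {}" using orth_solution_empty_block r(2) by blast
    with p show "p \<in> (\<Union>\<beta>\<in>cube n - A. ?Y\<^sub>\<beta> \<beta>)" by (auto simp: sol_orth_system_insert)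
  qed
  with proper have "?Y = \<Union>(?Y\<^sub>\<beta> ` (cube n - A))" by blast
  moreover have "finite (?Y\<^sub>\<beta> ` (cube n - A))" using finite_cube by simp
  ultimately have "\<exists>F. finite F \<and> (\<forall>Y'\<in>F. algebraic r (cube n) Y' \<and> Y' \<subset> ?Y) \<and> ?Y = \<Union>F"
    using proper by (intro exI[of _ "?Y\<^sub>\<beta> ` (cube n - A)"]) simp
  then show ?thesis unfolding irreducible_alg_def by blast
qed

lemma orth_system_irreducible:
  assumes A: "A \<subseteq> cube n" and "cube n - A \<noteq> {}" "card (cube n - A) \<le> r"
  shows "irreducible_alg r (cube n) (sol r (cube n) (orth_system n A))"
proof -
  let ?Y = "sol r (cube n) (orth_system n A)"
  have "finite (cube n - A)" using finite_cube by simp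
  then obtain g where g: "g ` {..<r} = cube n - A" using assms(2,3) by (rule obtain_onto_lessThan)
  define p where "p = (\<lambda>\<alpha>\<in>cube n. {i. i < r \<and> g i = \<alpha>})"
  have p: "p \<in> ?Y" unfolding p_def using A by (rule orth_solution_of_labelling) (simp add: g)
  show ?thesis
  proof (rule irreducible_algI_generic_point)
    show "algebraic r (cube n) ?Y" unfolding algebraic_def using system_over_orth_system[OF A] by blast
    show "p \<in> ?Y" by (fact p)
  next
    fix Y' assume "algebraic r (cube n) Y'" "p \<in> Y'"
    then obtain S' where S': "system_over (cube n) S'" "Y' = sol r (cube n) S'"
      unfolding algebraic_def by blast
    show "?Y \<subseteq> Y'"
    proof
      fix q assume q: "q \<in> ?Y"
      show "q \<in> Y'" unfolding S'(2)
      proof (rule sol_transfer[OF S'(1)])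
        show "p \<in> sol r (cube n) S'" using \<open>p \<in> Y'\<close> S'(2) by simp
        show "q \<in> cube n \<rightarrow>\<^sub>E Pow {..<r}" using q unfolding sol_orth_system_iff by blast
      next
        fix i assume "i < r"
        with q obtain \<alpha> where "\<alpha> \<in> cube n - A" "\<forall>v\<in>cube n. i \<in> q v \<longleftrightarrow> v = \<alpha>"
          by (rule orth_solution_label)
        moreover from this(1) obtain j where "j < r" "g j = \<alpha>" unfolding g[symmetric] by blast
        ultimately have "\<forall>v\<in>cube n. i \<in> q v \<longleftrightarrow> j \<in> p v" by (auto simp: p_def)
        with \<open>j < r\<close> show "\<exists>j<r. \<forall>v\<in>cube n. i \<in> q v \<longleftrightarrow> j \<in> p v" by blast
      qed
    qed
  qed
qed

lemma IR_orth_system: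
  assumes A: "A \<subseteq> cube n"
  shows "IR (cube n) (orth_system n A) = card (cube n - A)"
proof (rule IR_eqI, cases "cube n - A = {}")
  case True
  have "sol r (cube n) (orth_system n A) = {}" if "r \<ge> 1" for r
  proof (rule equals0I)
    fix p assume "p \<in> sol r (cube n) (orth_system n A)"
    with \<open>r \<ge> 1\<close> obtain \<alpha> where "\<alpha> \<in> cube n - A" by (elim orth_solution_label[of _ _ _ _ 0]) auto
    with True show False by blast
  qed
  moreover have "card (cube n - A) = 0" unfolding True by simp
  ultimately show "is_IR (cube n) (orth_system n A) (card (cube n - A))"
    unfolding is_IR_def by simp
next
  case False
  then have "card (cube n - A) \<ge> 1" using finite_cube by (simp add: Suc_leI card_gt_0_iff)
  then show "is_IR (cube n) (orth_system n A) (card (cube n - A))"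
    unfolding is_IR_def using orth_system_irreducible[OF A False] orth_system_reducible[OF A] by simp
qed

theorem mainTheorem5:
  fixes n :: nat and A :: "bool list set"
  assumes "n \<ge> 1" and "A \<subseteq> cube n"
  shows "IR (cube n) (orth_system n A) = 2 ^ n - card A
    \<and> (\<Sum>B \<in> Pow (cube n). real (IR (cube n) (orth_system n B))) / 2 ^ (2 ^ n)
        = (\<Sum>a = 0..2 ^ n. real (2 ^ n - a) * real ((2 ^ n) choose a)) / 2 ^ (2 ^ n)
    \<and> (\<Sum>a = 0..2 ^ n. real (2 ^ n - a) * real ((2 ^ n) choose a)) / 2 ^ (2 ^ n)
        = real (2 ^ n) / 2"
proof (intro conjI)
  have IR: "IR (cube n) (orth_system n B) = 2 ^ n - card B" if "B \<subseteq> cube n" for B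
    using that IR_orth_system finite_cube by (simp add: card_Diff_subset finite_subset card_cube)
  then show "IR (cube n) (orth_system n A) = 2 ^ n - card A" using assms(2) .
  have "(\<Sum>B \<in> Pow (cube n). real (IR (cube n) (orth_system n B)))
      = (\<Sum>B \<in> Pow (cube n). real (2 ^ n - card B))"
    using IR by (intro sum.cong) auto
  also have "\<dots> = (\<Sum>a = 0..2 ^ n. real (2 ^ n - a) * real ((2 ^ n) choose a))"
    using sum_Pow_by_card[OF finite_cube, of "\<lambda>a. real (2 ^ n - a)"] by (simp add: card_cube)
  finally show "(\<Sum>B \<in> Pow (cube n). real (IR (cube n) (orth_system n B))) / 2 ^ (2 ^ n)
      = (\<Sum>a = 0..2 ^ n. real (2 ^ n - a) * real ((2 ^ n) choose a)) / 2 ^ (2 ^ n)" by simp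
  show "(\<Sum>a = 0..2 ^ n. real (2 ^ n - a) * real ((2 ^ n) choose a)) / 2 ^ (2 ^ n)
      = real (2 ^ n) / 2"
    by (rule mean_complement_binomial)
qed

end
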